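(* Let $\mathcal{A}=(u,A,v)$ be a pre-standard admissible linear system of dimension $n\ge 2$, with system matrix $A=(a_{ij})$, whose left family $s=A^{-1}v$ is $\mathbb{K}$-linearly dependent. Let $m\in\{2,3,\ldots,n\}$ be the minimal index such that the left subfamily $(s_m,s_{m+1},\ldots,s_n)$ is $\mathbb{K}$-linearly independent. Then there exist matrices $T,U\in\mathbb{K}^{1\times(n+1-m)}$ such that $$U+(a_{m-1,j})_{j=m}^{n}-T\,(a_{ij})_{i,j=m}^{n}=\begin{bmatrix}0&\cdots&0\end{bmatrix}\quad\text{and}\quad T\,(v_i)_{i=m}^{n}=0,$$ where the first equation holds as an identity of row vectors over $\mathbb{K}\langle X\rangle$.
   Context: $\mathbb{K}$ is a commutative field, $X=\{x_1,\ldots,x_d\}$ a finite alphabet, $\mathbb{K}\langle X\rangle$ the free associative algebra and $\mathbb{K}(\!\langle X\rangle\!)$ its free field (universal field of fractions). A linear representation of $f\in\mathbb{K}(\!\langle X\rangle\!)$ is a triple $(u,A,v)$ with $u\in\mathbb{K}^{1\times n}$, $v\in\mathbb{K}^{n\times 1}$ and full (i.e. invertible over the free field) $A=A_0\otimes 1+\sum_{\ell=1}^d A_\ell\otimes x_\ell$, $A_\ell\in\mathbb{K}^{n\times n}$, with $f=uA^{-1}v$; $n$ is its dimension. It is an admissible linear system (ALS) if $u=e_1=[1,0,\ldots,0]$. The left family is $s=A^{-1}v$ (entries $s_i$). An ALS $(u,A,v)$ of dimension $n$ for a nonzero polynomial $p\in\mathbb{K}\langle X\rangle$ is pre-standard if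 $v=[0,\ldots,0,\lambda]^\top$ for some $\lambda\in\mathbb{K}$ and $A=(a_{ij})$ is upper triangular with $a_{ii}=1$ for all $i$. *)

theory Defs
  imports Main "HOL-Library.Poly_Mapping"
begin

text \<open>Words over the alphabet X = {x_1,...,x_d}; letter x_l is encoded by the
  natural number l.  The free monoid X^* with concatenation as (non-commutative)
  monoid operation written additively, so that finitely supported maps
  ncword =>0 K form the free associative algebra K<X> via Poly_Mapping's
  convolution product.\<close>

datatype ncword = Word "nat list"

instantiation ncword :: monoid_add
begin
definition zero_ncword :: ncword where "zero_ncword = Word []"
fun plus_ncword :: "ncword \<Rightarrow> ncword \<Rightarrow> ncword" where
  "plus_ncword (Word a) (Word b) = Word (a @ b)"
instance
proof
  fix a b c :: ncword
  show "a + b + c = a + (b + c)" by (cases a; cases b; cases c) simp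
  show "0 + a = a" by (cases a) (simp add: zero_ncword_def)
  show "a + 0 = a" by (cases a) (simp add: zero_ncword_def)
qed
end

type_synonym 'k ncpoly = "ncword \<Rightarrow>\<^sub>0 'k"

definition ncconst :: "'k::field \<Rightarrow> 'k ncpoly" where
  "ncconst c = Poly_Mapping.single (Word []) c"

definition ncvar :: "nat \<Rightarrow> 'k::field ncpoly" where
  "ncvar l = Poly_Mapping.single (Word [l]) 1"

text \<open>Entry (i,j) of the system matrix A = A_0 (x) 1 + sum_{l=1}^d A_l (x) x_l,
  given the coefficient matrices A0 and Al l (l = 1..d), indices 1-based.\<close>
definition als_entry ::
  "nat \<Rightarrow> (nat \<Rightarrow> nat \<Rightarrow> 'k::field) \<Rightarrow> (nat \<Rightarrow> nat \<Rightarrow> nat \<Rightarrow> 'k) \<Rightarrow> nat \<Rightarrow> nat \<Rightarrow> 'k ncpoly"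
  where
  "als_entry d A0 Al i j = ncconst (A0 i j) + (\<Sum>l=1..d. ncconst (Al l i j) * ncvar l)"

definition nc_lin_indep :: "(nat \<Rightarrow> 'k::field ncpoly) \<Rightarrow> nat set \<Rightarrow> bool" where
  "nc_lin_indep s I \<longleftrightarrow>
     (\<forall>c::nat \<Rightarrow> 'k. (\<Sum>i\<in>I. ncconst (c i) * s i) = 0 \<longrightarrow> (\<forall>i\<in>I. c i = 0))"

end

theory Submission
  imports Defs
begin

text \<open>Minimality of \<open>m\<close> expresses \<open>s\<^sub>m\<^sub>-\<^sub>1\<close> as a \<open>\<bbbK>\<close>-combination \<open>\<Sum> U\<^sub>j s\<^sub>j\<close>
  of the independent tail \<open>s\<^sub>m, \<dots>, s\<^sub>n\<close>; substituting it into row \<open>m - 1\<close> of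
  \<open>A s = v\<close> shows that the row \<open>R = U + (a\<^sub>m\<^sub>-\<^sub>1\<^sub>,\<^sub>j)\<close> annihilates the tail.
  The scalar part of the lower right block of \<open>A\<close> is unitriangular, so forward substitution
  gives \<open>T\<close> for which \<open>R - T A\<close> has no constant part, i.e. \<open>R - T A = \<Sum>\<^sub>l x\<^sub>l \<rho>\<^sub>l\<close> with
  scalar rows \<open>\<rho>\<^sub>l\<close>. Pairing with the tail gives \<open>\<Sum>\<^sub>l x\<^sub>l (\<rho>\<^sub>l s) = - T v\<close>. As the constants
  and the left ideals \<open>x\<^sub>l \<bbbK>\<langle>X\<rangle>\<close> form a direct sum in the free algebra, \<open>T v = 0\<close> and every
  \<open>\<rho>\<^sub>l s\<close> vanishes, so \<open>\<rho>\<^sub>l = 0\<close> by independence of the tail.\<close>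

lemma ncconst_eq_single: "ncconst c = Poly_Mapping.single 0 c"
  by (simp add: ncconst_def zero_ncword_def)

lemma lookup_ncconst_mult: "Poly_Mapping.lookup (ncconst c * p) w = c * Poly_Mapping.lookup p w"
  by (simp add: ncconst_eq_single lookup_mult lookup_single when_mult Sum_any.delta Sum_any_right_distrib mult_when)

lemma lookup_mult_ncconst: "Poly_Mapping.lookup (p * ncconst c) w = Poly_Mapping.lookup p w * c"
proof -
  have "(\<Sum>q. c when q = 0 when w = u + q) = (c when w = u)" for u :: ncword
  proof -
    have "(\<lambda>q. c when q = 0 when w = u + q) = (\<lambda>q. if q = 0 then (c when w = u) else 0)"
      by (auto simp: fun_eq_iff when_def)
    then show ?thesis by (simp only: Sum_any.delta)
  qed
  then show ?thesis
    by (simp add: ncconst_eq_single lookup_mult lookup_single mult_when Sum_any.delta)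
qed

lemma ncconst_mult_commute: "ncconst c * p = p * ncconst c"
  by (rule poly_mapping_eqI) (simp add: lookup_ncconst_mult lookup_mult_ncconst mult.commute)

lemma ncconst_0 [simp]: "ncconst 0 = 0"
  and ncconst_1 [simp]: "ncconst 1 = 1"
  by (simp_all add: ncconst_eq_single)

lemma ncconst_add: "ncconst (a + b) = ncconst a + ncconst b"
  and ncconst_diff: "ncconst (a - b) = ncconst a - ncconst b"
  and ncconst_mult: "ncconst (a * b) = ncconst a * ncconst b"
  and ncconst_uminus: "ncconst (- a) = - ncconst a"
  by (simp_all add: ncconst_eq_single single_add single_diff mult_single single_uminus)

lemma ncconst_sum: "ncconst (\<Sum>i\<in>I. f i) = (\<Sum>i\<in>I. ncconst (f i))"
  by (induction I rule: infinite_finite_induct) (simp_all add: ncconst_add)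

lemma lookup_ncconst: "Poly_Mapping.lookup (ncconst c) (Word ws) = (if ws = [] then c else 0)"
  by (simp add: ncconst_def lookup_single when_def)

lemma lookup_single_mult:
  "Poly_Mapping.lookup (Poly_Mapping.single u c * p) w = c * (\<Sum>q. Poly_Mapping.lookup p q when w = u + q)"
  unfolding lookup_mult lookup_single by (simp add: when_mult Sum_any.delta)

lemma lookup_ncvar_mult_Nil: "Poly_Mapping.lookup (ncvar l * p) (Word []) = 0"
proof -
  have "Word [] \<noteq> Word [l] + q" for q by (cases q) simp
  then show ?thesis by (simp add: ncvar_def lookup_single_mult)
qed

lemma lookup_ncvar_mult_Cons:
  "Poly_Mapping.lookup (ncvar l * p) (Word (a # ws)) = (if a = l then Poly_Mapping.lookup p (Word ws) else 0)"
proof -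
  have "Word (a # ws) = Word [l] + q \<longleftrightarrow> a = l \<and> q = Word ws" for q by (cases q) auto
  then show ?thesis by (simp add: ncvar_def lookup_single_mult when_def Sum_any.delta')
qed

lemma sum_ncvar_mult_plus_ncconst_eq_0D:
  assumes "finite L" and "(\<Sum>l\<in>L. ncvar l * p l) + ncconst c = 0"
  shows "c = 0" and "\<forall>l\<in>L. p l = 0"
proof -
  show "c = 0"
    using arg_cong[OF assms(2), of "\<lambda>q. Poly_Mapping.lookup q (Word [])"]
    by (simp add: lookup_add lookup_sum lookup_ncvar_mult_Nil lookup_ncconst)
  show "\<forall>l\<in>L. p l = 0"
  proof (intro ballI poly_mapping_eqI)
    fix l w assume "l \<in> L"
    obtain ws where "w = Word ws" by (cases w)
    with \<open>l \<in> L\<close> show "Poly_Mapping.lookup (p l) w = Poly_Mapping.lookup 0 w"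
      using arg_cong[OF assms(2), of "\<lambda>q. Poly_Mapping.lookup q (Word (l # ws))"] assms(1)
      by (simp add: lookup_add lookup_sum lookup_ncvar_mult_Cons lookup_ncconst)
  qed
qed

function forward_subst :: "(nat \<Rightarrow> nat \<Rightarrow> 'a::ring_1) \<Rightarrow> (nat \<Rightarrow> 'a) \<Rightarrow> nat \<Rightarrow> nat \<Rightarrow> 'a" where
  "forward_subst M r m j = r j - (\<Sum>i=m..<j. forward_subst M r m i * M i j)"
  by pat_completeness auto
termination by (relation "measure (\<lambda>(M, r, m, j). j)") auto

declare forward_subst.simps [simp del]

lemma forward_subst_solves:
  fixes M :: "nat \<Rightarrow> nat \<Rightarrow> 'a::ring_1"
  assumes diag: "\<forall>j\<in>{m..n}. M j j = 1"
    and lower: "\<forall>i\<in>{m..n}. \<forall>j\<in>{m..n}. j < i \<longrightarrow> M i j = 0"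
    and j: "j \<in> {m..n}"
  shows "(\<Sum>i=m..n. forward_subst M r m i * M i j) = r j"
proof -
  let ?T = "forward_subst M r m"
  have "(\<Sum>i=m..n. ?T i * M i j) = (\<Sum>i=m..j. ?T i * M i j)"
    by (rule sum.mono_neutral_right) (use j lower in auto)
  also have "\<dots> = (\<Sum>i=m..<j. ?T i * M i j) + ?T j"
    using j diag by (simp add: sum.atLeastLessThan_Suc flip: atLeastLessThanSuc_atLeastAtMost)
  also have "\<dots> = r j"
    by (subst (2) forward_subst.simps) simp
  finally show ?thesis .
qed

lemma ncconst_eq_0_iff [simp]: "ncconst c = 0 \<longleftrightarrow> c = 0"
  by (metis lookup_ncconst lookup_zero ncconst_0)

lemma not_nc_lin_indep_insertD:
  assumes indep: "nc_lin_indep s I" and dep: "\<not> nc_lin_indep s (insert k I)"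
    and "finite I" "k \<notin> I"
  shows "\<exists>c. s k = (\<Sum>i\<in>I. ncconst (c i) * s i)"
proof -
  obtain c where rel: "ncconst (c k) * s k + (\<Sum>i\<in>I. ncconst (c i) * s i) = 0"
    and nontriv: "\<exists>i\<in>insert k I. c i \<noteq> 0"
    using dep \<open>finite I\<close> \<open>k \<notin> I\<close> unfolding nc_lin_indep_def by auto
  have "c k \<noteq> 0"
  proof
    assume "c k = 0"
    with rel indep have "\<forall>i\<in>I. c i = 0" unfolding nc_lin_indep_def by simp
    with nontriv \<open>c k = 0\<close> show False by simp
  qed
  have "s k = ncconst (inverse (c k)) * (ncconst (c k) * s k)"
    using \<open>c k \<noteq> 0\<close> by (simp flip: mult.assoc ncconst_mult)
  also have "\<dots> = (\<Sum>i\<in>I. ncconst (- c i / c k) * s i)"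
    using rel by (simp add: eq_neg_iff_add_eq_0[symmetric] sum_distrib_left ncconst_mult
        ncconst_uminus divide_inverse mult.commute[of _ "inverse _"] mult.assoc sum_negf)
  finally show ?thesis by (rule exI[where x = "\<lambda>i. - c i / c k"])
qed

lemma als_entry_ncvar_left:
  "als_entry d A0 Al i j = ncconst (A0 i j) + (\<Sum>l=1..d. ncvar l * ncconst (Al l i j))"
  unfolding als_entry_def by (simp only: ncconst_mult_commute[of "Al _ i j"])

lemma als_entry_eq_ncconst_iff:
  "als_entry d A0 Al i j = ncconst c \<longleftrightarrow> A0 i j = c \<and> (\<forall>l\<in>{1..d}. Al l i j = 0)"
proof
  assume "als_entry d A0 Al i j = ncconst c"
  then have "(\<Sum>l=1..d. ncvar l * ncconst (Al l i j)) + ncconst (A0 i j - c) = 0"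
    unfolding als_entry_ncvar_left ncconst_diff by (simp add: algebra_simps)
  from sum_ncvar_mult_plus_ncconst_eq_0D[OF _ this]
  show "A0 i j = c \<and> (\<forall>l\<in>{1..d}. Al l i j = 0)" by simp
qed (simp add: als_entry_def)

lemma ncconst_mult_ncvar_mult_ncconst:
  "ncconst a * (ncvar l * ncconst b) = ncvar l * ncconst (a * b)"
  by (metis mult.assoc ncconst_mult ncconst_mult_commute)

lemma sum_ncconst_mult_als_entry:
  "(\<Sum>i\<in>I. ncconst (T i) * als_entry d A0 Al i j)
     = ncconst (\<Sum>i\<in>I. T i * A0 i j) + (\<Sum>l=1..d. ncvar l * ncconst (\<Sum>i\<in>I. T i * Al l i j))"
  unfolding als_entry_ncvar_left
  by (simp add: distrib_left sum.distrib sum_distrib_left ncconst_sum ncconst_mult_ncvar_mult_ncconst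
      flip: ncconst_mult) (rule sum.swap)

lemma annihilating_row_is_row_combination:
  fixes A0 :: "nat \<Rightarrow> nat \<Rightarrow> 'k::field"
  assumes diag: "\<forall>i\<in>{m..n}. A0 i i = 1"
    and lower: "\<forall>i\<in>{m..n}. \<forall>j\<in>{m..n}. j < i \<longrightarrow> A0 i j = 0"
    and rows: "\<forall>i\<in>{m..n}. (\<Sum>j\<in>{m..n}. als_entry d A0 Al i j * s j) = ncconst (v i)"
    and annihilating: "(\<Sum>j\<in>{m..n}. (ncconst (U j) + als_entry d A0 Al k j) * s j) = 0"
    and indep: "nc_lin_indep s {m..n}"
  shows "\<exists>T. (\<forall>j\<in>{m..n}. ncconst (U j) + als_entry d A0 Al k j
                      - (\<Sum>i\<in>{m..n}. ncconst (T i) * als_entry d A0 Al i j) = 0)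
             \<and> (\<Sum>i\<in>{m..n}. T i * v i) = 0"
proof -
  define T where "T = forward_subst A0 (\<lambda>j. U j + A0 k j) m"
  define R where "R j = ncconst (U j) + als_entry d A0 Al k j
                      - (\<Sum>i\<in>{m..n}. ncconst (T i) * als_entry d A0 Al i j)" for j
  define \<rho> where "\<rho> l j = Al l k j - (\<Sum>i\<in>{m..n}. T i * Al l i j)" for l j
  have T_solves: "(\<Sum>i=m..n. T i * A0 i j) = U j + A0 k j" if "j \<in> {m..n}" for j
    unfolding T_def using diag lower that by (rule forward_subst_solves)
  have R_linear: "R j = (\<Sum>l=1..d. ncvar l * ncconst (\<rho> l j))" if "j \<in> {m..n}" for j
  proof -
    have "R j = (\<Sum>l=1..d. ncvar l * ncconst (Al l k j))
                 - (\<Sum>l=1..d. ncvar l * ncconst (\<Sum>i=m..n. T i * Al l i j))"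
      unfolding R_def sum_ncconst_mult_als_entry T_solves[OF that]
      unfolding als_entry_ncvar_left ncconst_add by (simp add: algebra_simps)
    then show ?thesis
      by (simp add: \<rho>_def ncconst_diff right_diff_distrib sum_subtractf)
  qed
  have "(\<Sum>j\<in>{m..n}. R j * s j)
          = (\<Sum>j\<in>{m..n}. (ncconst (U j) + als_entry d A0 Al k j) * s j)
            - (\<Sum>j\<in>{m..n}. \<Sum>i\<in>{m..n}. ncconst (T i) * (als_entry d A0 Al i j * s j))"
    unfolding R_def left_diff_distrib sum_subtractf sum_distrib_right mult.assoc ..
  also have "\<dots> = - (\<Sum>i\<in>{m..n}. ncconst (T i) * (\<Sum>j\<in>{m..n}. als_entry d A0 Al i j * s j))"
    unfolding annihilating sum_distrib_left by (subst sum.swap) simp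
  also have "\<dots> = - (\<Sum>i\<in>{m..n}. ncconst (T i) * ncconst (v i))"
    using rows by (intro arg_cong[where f = uminus] sum.cong) auto
  also have "\<dots> = - ncconst (\<Sum>i\<in>{m..n}. T i * v i)"
    by (simp only: ncconst_sum ncconst_mult)
  finally have R_family: "(\<Sum>j\<in>{m..n}. R j * s j) = - ncconst (\<Sum>i\<in>{m..n}. T i * v i)" .
  have "(\<Sum>j\<in>{m..n}. R j * s j) = (\<Sum>l=1..d. ncvar l * (\<Sum>j\<in>{m..n}. ncconst (\<rho> l j) * s j))"
    unfolding sum_distrib_left
    by (subst sum.swap) (simp add: R_linear sum_distrib_right mult.assoc)
  with R_family have "(\<Sum>l=1..d. ncvar l * (\<Sum>j\<in>{m..n}. ncconst (\<rho> l j) * s j))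
                        + ncconst (\<Sum>i\<in>{m..n}. T i * v i) = 0"
    by (simp add: eq_neg_iff_add_eq_0)
  from sum_ncvar_mult_plus_ncconst_eq_0D[OF _ this]
  have "(\<Sum>i\<in>{m..n}. T i * v i) = 0" and "\<forall>l\<in>{1..d}. \<forall>j\<in>{m..n}. \<rho> l j = 0"
    using indep unfolding nc_lin_indep_def by auto
  then show ?thesis
    using R_linear unfolding R_def by auto
qed

lemma upper_triangular_row_from:
  assumes upper: "\<forall>i\<in>{1..n}. \<forall>j\<in>{1..n}. j < i \<longrightarrow> als_entry d A0 Al i j = 0"
    and left_family: "\<forall>i\<in>{1..n}. (\<Sum>j=1..n. als_entry d A0 Al i j * s j) = ncconst (v i)"
    and "1 \<le> k" "k \<le> i" "i \<le> n"
  shows "(\<Sum>j=k..n. als_entry d A0 Al i j * s j) = ncconst (v i)"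
proof -
  have "(\<Sum>j=k..n. als_entry d A0 Al i j * s j) = (\<Sum>j=1..n. als_entry d A0 Al i j * s j)"
    by (rule sum.mono_neutral_left) (use assms in auto)
  with left_family assms show ?thesis by simp
qed

theorem lemma2p5:
  fixes d n m :: nat
    and A0 :: "nat \<Rightarrow> nat \<Rightarrow> 'k::field"
    and Al :: "nat \<Rightarrow> nat \<Rightarrow> nat \<Rightarrow> 'k"
    and v :: "nat \<Rightarrow> 'k"
    and s :: "nat \<Rightarrow> 'k ncpoly"
  assumes n_ge: "n \<ge> 2"
    and diag: "\<forall>i\<in>{1..n}. als_entry d A0 Al i i = 1"
    and upper: "\<forall>i\<in>{1..n}. \<forall>j\<in>{1..n}. j < i \<longrightarrow> als_entry d A0 Al i j = 0"
    and v_form: "\<forall>i\<in>{1..<n}. v i = 0"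
    and left_family: "\<forall>i\<in>{1..n}. (\<Sum>j=1..n. als_entry d A0 Al i j * s j) = ncconst (v i)"
    and nonzero: "s 1 \<noteq> 0"
    and dependent: "\<not> nc_lin_indep s {1..n}"
    and m_range: "m \<in> {2..n}"
    and m_indep: "nc_lin_indep s {m..n}"
    and m_minimal: "\<forall>k\<in>{1..<m}. \<not> nc_lin_indep s {k..n}"
  shows "\<exists>T U :: nat \<Rightarrow> 'k.
           (\<forall>j\<in>{m..n}. ncconst (U j) + als_entry d A0 Al (m - 1) j
                          - (\<Sum>i=m..n. ncconst (T i) * als_entry d A0 Al i j) = 0)
         \<and> (\<Sum>i=m..n. T i * v i) = 0"
proof -
  have tail: "{m - 1..n} = insert (m - 1) {m..n}" "m - 1 \<notin> {m..n}"
    using m_range by auto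
  have "\<not> nc_lin_indep s (insert (m - 1) {m..n})"
    using m_minimal m_range unfolding tail(1)[symmetric] by auto
  then obtain c where s_prev: "s (m - 1) = (\<Sum>j=m..n. ncconst (c j) * s j)"
    using not_nc_lin_indep_insertD[OF m_indep] tail(2) by blast
  have prev: "1 \<le> m - 1" "m - 1 < n" using m_range by auto
  have "s (m - 1) + (\<Sum>j=m..n. als_entry d A0 Al (m - 1) j * s j) = 0"
    using upper_triangular_row_from[OF upper left_family prev(1) order_refl] prev diag v_form
    unfolding tail(1) by (simp add: sum.insert[OF _ tail(2)])
  then have annihilating: "(\<Sum>j=m..n. (ncconst (c j) + als_entry d A0 Al (m - 1) j) * s j) = 0"
    unfolding s_prev by (simp add: distrib_right sum.distrib)
  have A0_diag: "\<forall>i\<in>{m..n}. A0 i i = 1"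
    and A0_lower: "\<forall>i\<in>{m..n}. \<forall>j\<in>{m..n}. j < i \<longrightarrow> A0 i j = 0"
    using diag upper m_range
    by (auto simp: als_entry_eq_ncconst_iff[where c = 1, simplified]
        als_entry_eq_ncconst_iff[where c = 0, simplified])
  have rows: "\<forall>i\<in>{m..n}. (\<Sum>j=m..n. als_entry d A0 Al i j * s j) = ncconst (v i)"
    using upper_triangular_row_from[OF upper left_family] m_range by auto
  show ?thesis
    using annihilating_row_is_row_combination[OF A0_diag A0_lower rows annihilating m_indep] by blast
qed

end
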